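(* The logic $\mathsf{sCond}_{\mathrm{ACL}}^{\mathbf{UC}}=\mathsf{ICK}\oplus(q\to(p\mathrel{\Box\!\!\!\rightarrow} q))\oplus(p\mathrel{\Box\!\!\!\rightarrow}((p\mathrel{\Box\!\!\!\rightarrow} q)\to q))$ is sound and complete with respect to the class of conditional frames $(X,\leq,\mathcal{R})$ such that for all $x,y\in X$ and $R_a\in\mathcal{R}$: $xR_ay$ implies $x\leq y$, and $x(R_a\circ\leq)y$ implies $y(R_a\circ\leq)y$.
   Context: Formulas: $\phi ::= p\mid\bot\mid\phi\wedge\phi\mid\phi\vee\phi\mid\phi\to\phi\mid\phi\mathrel{\Box\!\!\!\rightarrow}\phi$. $\mathsf{ICK}\oplus\Gamma$ is the smallest set containing intuitionistic propositional logic, $\Gamma$, $(p\mathrel{\Box\!\!\!\rightarrow}(q\wedge r))\leftrightarrow((p\mathrel{\Box\!\!\!\rightarrow} q)\wedge(p\mathrel{\Box\!\!\!\rightarrow} r))$ and $(p\mathrel{\Box\!\!\!\rightarrow}\top)\leftrightarrow\top$, closed under uniform substitution, modus ponens and congruence rules for both arguments of $\mathrel{\Box\!\!\!\rightarrow}$. A conditional frame is $(X,\leq,\mathcal{R})$, $(X,\leq)$ a nonempty preorder, $\mathcal{R}=\{R_a\mid a\text{ an upset}\}$ with $(\leq\circ R_a)\subseteq(R_a\circ\leq)$; valuations assign upsets to letters and $x\models\phi\mathrel{\Box\!\!\!\rightarrow}\psi$ iff every $y$ with $xR_{V(\phi)}y$ satisfies $\psi$. Relation composition $R\circ S$ relates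 $x$ to $z$ if $xRy$ and $ySz$ for some $y$. *)

theory Defs
  imports Main
begin

datatype form =
    Atom nat
  | Bot
  | And form form
  | Or form form
  | Imp form form
  | Cond form form

definition Top :: form where "Top = Imp Bot Bot"
definition Iff :: "form \<Rightarrow> form \<Rightarrow> form" where
  "Iff a b = And (Imp a b) (Imp b a)"

primrec subst :: "(nat \<Rightarrow> form) \<Rightarrow> form \<Rightarrow> form" where
  "subst s (Atom n) = s n"
| "subst s Bot = Bot"
| "subst s (And a b) = And (subst s a) (subst s b)"
| "subst s (Or a b) = Or (subst s a) (subst s b)"
| "subst s (Imp a b) = Imp (subst s a) (subst s b)"
| "subst s (Cond a b) = Cond (subst s a) (subst s b)"

abbreviation "P \<equiv> Atom 0"
abbreviation "Q \<equiv> Atom 1"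
abbreviation "R \<equiv> Atom 2"

text \<open>Intuitionistic propositional logic is given by a standard Hilbert system
  (axiom schemes + modus ponens); the remaining axioms are stated for the letters
  p, q, r and the logic is closed under uniform substitution, modus ponens and
  the congruence rules for both arguments of the conditional.\<close>

inductive_set ICK :: "form set \<Rightarrow> form set" for G :: "form set" where
  ipc1: "Imp a (Imp b a) \<in> ICK G"
| ipc2: "Imp (Imp a (Imp b c)) (Imp (Imp a b) (Imp a c)) \<in> ICK G"
| ipc3: "Imp (And a b) a \<in> ICK G"
| ipc4: "Imp (And a b) b \<in> ICK G"
| ipc5: "Imp a (Imp b (And a b)) \<in> ICK G"
| ipc6: "Imp a (Or a b) \<in> ICK G"
| ipc7: "Imp b (Or a b) \<in> ICK G"
| ipc8: "Imp (Imp a c) (Imp (Imp b c) (Imp (Or a b) c)) \<in> ICK G"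
| ipc9: "Imp Bot a \<in> ICK G"
| gam: "g \<in> G \<Longrightarrow> g \<in> ICK G"
| ax_and: "Iff (Cond P (And Q R)) (And (Cond P Q) (Cond P R)) \<in> ICK G"
| ax_top: "Iff (Cond P Top) Top \<in> ICK G"
| sub: "a \<in> ICK G \<Longrightarrow> subst s a \<in> ICK G"
| mp: "Imp a b \<in> ICK G \<Longrightarrow> a \<in> ICK G \<Longrightarrow> b \<in> ICK G"
| cong_l: "Iff a b \<in> ICK G \<Longrightarrow> Iff (Cond a c) (Cond b c) \<in> ICK G"
| cong_r: "Iff a b \<in> ICK G \<Longrightarrow> Iff (Cond c a) (Cond c b) \<in> ICK G"

definition sCond_ACL_UC :: "form set" where
  "sCond_ACL_UC = ICK {Imp Q (Cond P Q), Cond P (Imp (Cond P Q) Q)}"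

text \<open>A frame is given by a carrier X, a preorder le on X, and a family of
  relations R a indexed by the upsets a of (X, le). Values of R on non-upsets
  are irrelevant.\<close>

definition upset :: "'w set \<Rightarrow> ('w \<Rightarrow> 'w \<Rightarrow> bool) \<Rightarrow> 'w set \<Rightarrow> bool" where
  "upset X le a \<longleftrightarrow> a \<subseteq> X \<and> (\<forall>x\<in>a. \<forall>y\<in>X. le x y \<longrightarrow> y \<in> a)"

definition cond_frame :: "'w set \<Rightarrow> ('w \<Rightarrow> 'w \<Rightarrow> bool) \<Rightarrow> ('w set \<Rightarrow> 'w \<Rightarrow> 'w \<Rightarrow> bool) \<Rightarrow> bool" where
  "cond_frame X le Rel \<longleftrightarrow>
     X \<noteq> {} \<and>
     (\<forall>x\<in>X. le x x) \<and>
     (\<forall>x\<in>X. \<forall>y\<in>X. \<forall>z\<in>X. le x y \<longrightarrow> le y z \<longrightarrow> le x z) \<and>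
     (\<forall>a. upset X le a \<longrightarrow>
        (\<forall>x y. Rel a x y \<longrightarrow> x \<in> X \<and> y \<in> X) \<and>
        (\<forall>x y z. x \<in> X \<and> le x y \<and> Rel a y z \<longrightarrow> (\<exists>u. Rel a x u \<and> le u z)))"

primrec sat :: "'w set \<Rightarrow> ('w \<Rightarrow> 'w \<Rightarrow> bool) \<Rightarrow> ('w set \<Rightarrow> 'w \<Rightarrow> 'w \<Rightarrow> bool)
                 \<Rightarrow> (nat \<Rightarrow> 'w set) \<Rightarrow> 'w \<Rightarrow> form \<Rightarrow> bool" where
  "sat X le Rel V x (Atom n) = (x \<in> V n)"
| "sat X le Rel V x Bot = False"
| "sat X le Rel V x (And a b) = (sat X le Rel V x a \<and> sat X le Rel V x b)"
| "sat X le Rel V x (Or a b) = (sat X le Rel V x a \<or> sat X le Rel V x b)"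
| "sat X le Rel V x (Imp a b) =
     (\<forall>y\<in>X. le x y \<longrightarrow> sat X le Rel V y a \<longrightarrow> sat X le Rel V y b)"
| "sat X le Rel V x (Cond a b) =
     (\<forall>y. Rel {z\<in>X. sat X le Rel V z a} x y \<longrightarrow> sat X le Rel V y b)"

definition valid_frame :: "'w set \<Rightarrow> ('w \<Rightarrow> 'w \<Rightarrow> bool) \<Rightarrow> ('w set \<Rightarrow> 'w \<Rightarrow> 'w \<Rightarrow> bool) \<Rightarrow> form \<Rightarrow> bool" where
  "valid_frame X le Rel phi \<longleftrightarrow>
     (\<forall>V. (\<forall>n. upset X le (V n)) \<longrightarrow> (\<forall>x\<in>X. sat X le Rel V x phi))"

definition UC_frame :: "'w set \<Rightarrow> ('w \<Rightarrow> 'w \<Rightarrow> bool) \<Rightarrow> ('w set \<Rightarrow> 'w \<Rightarrow> 'w \<Rightarrow> bool) \<Rightarrow> bool" where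
  "UC_frame X le Rel \<longleftrightarrow> cond_frame X le Rel \<and>
     (\<forall>a. upset X le a \<longrightarrow>
        (\<forall>x\<in>X. \<forall>y\<in>X. Rel a x y \<longrightarrow> le x y) \<and>
        (\<forall>x\<in>X. \<forall>y\<in>X. (\<exists>u. Rel a x u \<and> le u y) \<longrightarrow> (\<exists>u. Rel a y u \<and> le u y)))"

end

theory Submission
  imports Defs
begin

text \<open>Soundness: truth is persistent along the preorder, and the two frame conditions validate
  the two extra axioms.  If \<open>x R\<^sub>a y\<close> implies \<open>x \<le> y\<close>, persistence of \<open>q\<close> gives
  \<open>q \<rightarrow> (p \<box>\<rightarrow> q)\<close>; if every \<open>R\<^sub>a \<circ> \<le>\<close>-successor \<open>y\<close> of \<open>x\<close> has some \<open>R\<^sub>a\<close>-successor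
  below itself, then \<open>p \<box>\<rightarrow> q\<close> at \<open>y\<close> forces \<open>q\<close> at that successor and hence at \<open>y\<close>.

  Completeness: the canonical model consists of the prime theories ordered by inclusion, where
  \<open>\<Gamma> R\<^sub>A \<Delta>\<close> iff \<open>\<Gamma> \<subseteq> \<Delta>\<close> and \<open>\<psi> \<in> \<Delta>\<close> whenever \<open>\<phi> \<box>\<rightarrow> \<psi> \<in> \<Gamma>\<close> for a formula \<open>\<phi>\<close> with truth set \<open>A\<close>.
  Building \<open>\<Gamma> \<subseteq> \<Delta>\<close> into the relation makes the first frame condition automatic; the axiom
  \<open>q \<rightarrow> (p \<box>\<rightarrow> q)\<close> is what still lets Lindenbaum's lemma produce the witnesses needed in the
  truth lemma, and \<open>p \<box>\<rightarrow> ((p \<box>\<rightarrow> q) \<rightarrow> q)\<close> shows that every \<open>R\<^sub>A \<circ> \<subseteq>\<close>-successor is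
  \<open>R\<^sub>A\<close>-related to itself.\<close>

lemma cond_frame_refl:
  assumes "cond_frame X le Rel" "x \<in> X"
  shows "le x x"
proof -
  have "\<forall>x\<in>X. le x x"
    using assms(1) unfolding cond_frame_def by (elim conjE)
  then show ?thesis using assms(2) by blast
qed

lemma cond_frame_trans:
  assumes "cond_frame X le Rel" "x \<in> X" "y \<in> X" "z \<in> X" "le x y" "le y z"
  shows "le x z"
proof -
  have "\<forall>x\<in>X. \<forall>y\<in>X. \<forall>z\<in>X. le x y \<longrightarrow> le y z \<longrightarrow> le x z"
    using assms(1) unfolding cond_frame_def by (elim conjE)
  then show ?thesis using assms(2-) by blast
qed

lemma cond_frame_upsetD:
  assumes "cond_frame X le Rel" "upset X le a"
  shows "\<forall>x y. Rel a x y \<longrightarrow> x \<in> X \<and> y \<in> X"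
    and "\<forall>x y z. x \<in> X \<and> le x y \<and> Rel a y z \<longrightarrow> (\<exists>u. Rel a x u \<and> le u z)"
proof -
  have "\<forall>a. upset X le a \<longrightarrow>
      (\<forall>x y. Rel a x y \<longrightarrow> x \<in> X \<and> y \<in> X) \<and>
      (\<forall>x y z. x \<in> X \<and> le x y \<and> Rel a y z \<longrightarrow> (\<exists>u. Rel a x u \<and> le u z))"
    using assms(1) unfolding cond_frame_def by (elim conjE)
  with assms(2) show "\<forall>x y. Rel a x y \<longrightarrow> x \<in> X \<and> y \<in> X"
    and "\<forall>x y z. x \<in> X \<and> le x y \<and> Rel a y z \<longrightarrow> (\<exists>u. Rel a x u \<and> le u z)"
    by blast+
qed

lemma cond_frame_Rel_carrier:
  assumes "cond_frame X le Rel" "upset X le a" "Rel a x y"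
  shows "x \<in> X" "y \<in> X"
  using cond_frame_upsetD(1)[OF assms(1,2)] assms(3) by blast+

lemma cond_frame_Rel_mono:
  assumes "cond_frame X le Rel" "upset X le a" "x \<in> X" "le x y" "Rel a y z"
  shows "\<exists>u. Rel a x u \<and> le u z"
  using cond_frame_upsetD(2)[OF assms(1,2)] assms(3-) by blast

lemma UC_frame_cond_frame: "UC_frame X le Rel \<Longrightarrow> cond_frame X le Rel"
  unfolding UC_frame_def by (elim conjE)

lemma UC_frame_upsetD:
  assumes "UC_frame X le Rel" "upset X le a"
  shows "\<forall>x\<in>X. \<forall>y\<in>X. Rel a x y \<longrightarrow> le x y"
    and "\<forall>x\<in>X. \<forall>y\<in>X. (\<exists>u. Rel a x u \<and> le u y) \<longrightarrow> (\<exists>u. Rel a y u \<and> le u y)"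
proof -
  have "\<forall>a. upset X le a \<longrightarrow>
      (\<forall>x\<in>X. \<forall>y\<in>X. Rel a x y \<longrightarrow> le x y) \<and>
      (\<forall>x\<in>X. \<forall>y\<in>X. (\<exists>u. Rel a x u \<and> le u y) \<longrightarrow> (\<exists>u. Rel a y u \<and> le u y))"
    using assms(1) unfolding UC_frame_def by (elim conjE)
  with assms(2) show "\<forall>x\<in>X. \<forall>y\<in>X. Rel a x y \<longrightarrow> le x y"
    and "\<forall>x\<in>X. \<forall>y\<in>X. (\<exists>u. Rel a x u \<and> le u y) \<longrightarrow> (\<exists>u. Rel a y u \<and> le u y)"
    by blast+
qed

lemma UC_frame_Rel_le:
  assumes "UC_frame X le Rel" "upset X le a" "x \<in> X" "Rel a x y"
  shows "le x y"
  using UC_frame_upsetD(1)[OF assms(1,2)] assms(3,4)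
    cond_frame_Rel_carrier[OF UC_frame_cond_frame[OF assms(1)] assms(2,4)] by blast

lemma UC_frame_Rel_le_refl:
  assumes "UC_frame X le Rel" "upset X le a" "x \<in> X" "y \<in> X" "Rel a x u" "le u y"
  shows "\<exists>v. Rel a y v \<and> le v y"
  using UC_frame_upsetD(2)[OF assms(1,2)] assms(3-) by blast

lemma sat_mono:
  assumes cf: "cond_frame X le Rel" and V: "\<forall>n. upset X le (V n)"
  shows "x \<in> X \<Longrightarrow> y \<in> X \<Longrightarrow> le x y \<Longrightarrow> sat X le Rel V x phi \<Longrightarrow> sat X le Rel V y phi"
proof (induction phi arbitrary: x y)
  case (Atom n)
  then show ?case using V by (auto simp: upset_def)
next
  case (Imp a b)
  then show ?case using cond_frame_trans[OF cf, of x y] by auto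
next
  case (Cond a b)
  let ?A = "{z\<in>X. sat X le Rel V z a}"
  have up: "upset X le ?A" unfolding upset_def using Cond.IH(1) by auto
  show ?case
  proof (simp only: sat.simps, intro allI impI)
    fix z assume yz: "Rel ?A y z"
    then obtain u where xu: "Rel ?A x u" and "le u z"
      using cond_frame_Rel_mono[OF cf up] Cond.prems by blast
    moreover have "sat X le Rel V u b" using xu Cond.prems(4) by simp
    ultimately show "sat X le Rel V z b"
      using Cond.IH(2) cond_frame_Rel_carrier[OF cf up] yz by blast
  qed
qed (simp_all, blast)

lemma upset_sat:
  assumes "cond_frame X le Rel" "\<forall>n. upset X le (V n)"
  shows "upset X le {x\<in>X. sat X le Rel V x phi}"
  unfolding upset_def using sat_mono[OF assms] by blast

lemma sat_subst:
  assumes cf: "cond_frame X le Rel" and V: "\<forall>n. upset X le (V n)"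
  shows "x \<in> X \<Longrightarrow>
    sat X le Rel V x (subst s phi) \<longleftrightarrow> sat X le Rel (\<lambda>n. {y\<in>X. sat X le Rel V y (s n)}) x phi"
proof (induction phi arbitrary: x)
  case (Cond a b)
  let ?A = "{y\<in>X. sat X le Rel V y (subst s a)}"
  have A: "?A = {y\<in>X. sat X le Rel (\<lambda>n. {y\<in>X. sat X le Rel V y (s n)}) y a}"
    using Cond.IH(1) by auto
  have "\<forall>y. Rel ?A x y \<longrightarrow> y \<in> X"
    using cond_frame_Rel_carrier[OF cf upset_sat[OF cf V]] by blast
  then show ?case unfolding subst.simps sat.simps A[symmetric] using Cond.IH(2) by blast
qed simp_all

lemma sat_Iff:
  assumes "cond_frame X le Rel" "x \<in> X"
  shows "sat X le Rel V x (Iff a b) \<Longrightarrow> sat X le Rel V x a \<longleftrightarrow> sat X le Rel V x b"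
  using cond_frame_refl[OF assms] assms(2) by (auto simp: Iff_def)

lemma valid_frameI:
  "(\<And>V x. \<forall>n. upset X le (V n) \<Longrightarrow> x \<in> X \<Longrightarrow> sat X le Rel V x phi) \<Longrightarrow> valid_frame X le Rel phi"
  unfolding valid_frame_def by blast

lemma valid_frameD:
  "valid_frame X le Rel phi \<Longrightarrow> \<forall>n. upset X le (V n) \<Longrightarrow> x \<in> X \<Longrightarrow> sat X le Rel V x phi"
  unfolding valid_frame_def by blast

section \<open>Soundness\<close>

lemma valid_frame_ICK:
  assumes cf: "cond_frame X le Rel" and G: "\<forall>g\<in>G. valid_frame X le Rel g"
  shows "phi \<in> ICK G \<Longrightarrow> valid_frame X le Rel phi"
proof (induction phi rule: ICK.induct)
  case (sub a s)
  show ?case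
  proof (rule valid_frameI)
    fix V :: "nat \<Rightarrow> _" and x assume V: "\<forall>n. upset X le (V n)" and x: "x \<in> X"
    have "\<forall>n. upset X le {y\<in>X. sat X le Rel V y (s n)}" using upset_sat[OF cf V] by blast
    then show "sat X le Rel V x (subst s a)"
      unfolding sat_subst[OF cf V x] by (rule valid_frameD[OF sub.IH _ x])
  qed
next
  case (mp a b)
  show ?case
  proof (rule valid_frameI)
    fix V :: "nat \<Rightarrow> _" and x assume V: "\<forall>n. upset X le (V n)" and x: "x \<in> X"
    show "sat X le Rel V x b"
      using valid_frameD[OF mp.IH(1) V x] valid_frameD[OF mp.IH(2) V x] cond_frame_refl[OF cf x] x
      by simp
  qed
next
  case (cong_l a b c)
  show ?case
  proof (rule valid_frameI)
    fix V :: "nat \<Rightarrow> _" and x assume V: "\<forall>n. upset X le (V n)"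
    have "{y\<in>X. sat X le Rel V y a} = {y\<in>X. sat X le Rel V y b}"
      using sat_Iff[OF cf] valid_frameD[OF cong_l.IH V] by blast
    then show "sat X le Rel V x (Iff (Cond a c) (Cond b c))" by (simp add: Iff_def)
  qed
next
  case (cong_r a b c)
  show ?case
  proof (rule valid_frameI)
    fix V :: "nat \<Rightarrow> _" and x assume V: "\<forall>n. upset X le (V n)"
    have "\<forall>w y. Rel {y\<in>X. sat X le Rel V y c} w y \<longrightarrow> y \<in> X"
      using cond_frame_Rel_carrier[OF cf upset_sat[OF cf V]] by blast
    moreover have "\<forall>y\<in>X. sat X le Rel V y a \<longleftrightarrow> sat X le Rel V y b"
      using sat_Iff[OF cf] valid_frameD[OF cong_r.IH V] by blast
    ultimately show "sat X le Rel V x (Iff (Cond c a) (Cond c b))" by (auto simp: Iff_def)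
  qed
next
  case (ipc1 a b)
  show ?case by (rule valid_frameI) (simp, blast intro: sat_mono[OF cf])
next
  case (ipc2 a b c)
  show ?case by (rule valid_frameI) (simp, blast intro: cond_frame_trans[OF cf] cond_frame_refl[OF cf])
next
  case (ipc5 a b)
  show ?case by (rule valid_frameI) (simp, blast intro: sat_mono[OF cf])
next
  case (ipc8 a c b)
  show ?case by (rule valid_frameI) (simp, blast intro: cond_frame_trans[OF cf])
next
  case ax_and
  show ?case by (rule valid_frameI) (auto simp: Iff_def)
qed (use G in \<open>auto intro: valid_frameI simp: Iff_def Top_def\<close>)

lemma UC_frame_valid_Imp_Cond:
  assumes uc: "UC_frame X le Rel"
  shows "valid_frame X le Rel (Imp Q (Cond P Q))"
proof (rule valid_frameI)
  fix V :: "nat \<Rightarrow> _" and x assume V: "\<forall>n. upset X le (V n)"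
  have cf: "cond_frame X le Rel" using uc by (rule UC_frame_cond_frame)
  let ?A = "{y\<in>X. sat X le Rel V y P}"
  have up: "upset X le ?A" using cf V by (rule upset_sat)
  show "sat X le Rel V x (Imp Q (Cond P Q))"
  proof (unfold sat.simps(5,6), intro ballI impI allI)
    fix y z assume y: "y \<in> X" "le x y" "sat X le Rel V y Q" and "Rel ?A y z"
    then have "le y z" "z \<in> X"
      using UC_frame_Rel_le[OF uc up] cond_frame_Rel_carrier[OF cf up] by blast+
    then show "sat X le Rel V z Q" using sat_mono[OF cf V] y by blast
  qed
qed

lemma UC_frame_valid_Cond_Imp_Cond:
  assumes uc: "UC_frame X le Rel"
  shows "valid_frame X le Rel (Cond P (Imp (Cond P Q) Q))"
proof (rule valid_frameI)
  fix V :: "nat \<Rightarrow> _" and x assume V: "\<forall>n. upset X le (V n)" and x: "x \<in> X"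
  have cf: "cond_frame X le Rel" using uc by (rule UC_frame_cond_frame)
  let ?A = "{y\<in>X. sat X le Rel V y P}"
  have up: "upset X le ?A" using cf V by (rule upset_sat)
  show "sat X le Rel V x (Cond P (Imp (Cond P Q) Q))"
  proof (unfold sat.simps(5,6), intro ballI impI allI)
    fix y z assume "Rel ?A x y" and z: "z \<in> X" "le y z" and zQ: "\<forall>u. Rel ?A z u \<longrightarrow> sat X le Rel V u Q"
    then obtain u where u: "Rel ?A z u" "le u z"
      using UC_frame_Rel_le_refl[OF uc up x] by blast
    then have "u \<in> X" "sat X le Rel V u Q" using cond_frame_Rel_carrier[OF cf up] zQ by blast+
    then show "sat X le Rel V z Q" using sat_mono[OF cf V] u z by blast
  qed
qed

lemma sCond_ACL_UC_sound:
  assumes uc: "UC_frame X le Rel" and phi: "phi \<in> sCond_ACL_UC"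
  shows "valid_frame X le Rel phi"
proof (rule valid_frame_ICK[OF UC_frame_cond_frame[OF uc]])
  show "\<forall>g\<in>{Imp Q (Cond P Q), Cond P (Imp (Cond P Q) Q)}. valid_frame X le Rel g"
    using UC_frame_valid_Imp_Cond[OF uc] UC_frame_valid_Cond_Imp_Cond[OF uc] by simp
  show "phi \<in> ICK {Imp Q (Cond P Q), Cond P (Imp (Cond P Q) Q)}"
    using phi unfolding sCond_ACL_UC_def .
qed

lemma ICK_iffI: "Imp a b \<in> ICK G \<Longrightarrow> Imp b a \<in> ICK G \<Longrightarrow> Iff a b \<in> ICK G"
  unfolding Iff_def by (rule ICK.mp[OF ICK.mp[OF ICK.ipc5]])

lemma ICK_iffD1: "Iff a b \<in> ICK G \<Longrightarrow> Imp a b \<in> ICK G"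
  unfolding Iff_def by (rule ICK.mp[OF ICK.ipc3])

lemma ICK_iffD2: "Iff a b \<in> ICK G \<Longrightarrow> Imp b a \<in> ICK G"
  unfolding Iff_def by (rule ICK.mp[OF ICK.ipc4])

lemma ICK_imp_S: "Imp a (Imp b c) \<in> ICK G \<Longrightarrow> Imp a b \<in> ICK G \<Longrightarrow> Imp a c \<in> ICK G"
  by (rule ICK.mp[OF ICK.mp[OF ICK.ipc2]])

lemma ICK_imp_K: "b \<in> ICK G \<Longrightarrow> Imp a b \<in> ICK G"
  by (rule ICK.mp[OF ICK.ipc1])

lemma ICK_imp_refl: "Imp a a \<in> ICK G"
  by (rule ICK_imp_S[OF ICK.ipc1 ICK.ipc1[of a a]])

lemma ICK_Top: "Top \<in> ICK G"
  unfolding Top_def by (rule ICK_imp_refl)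

lemma ICK_Cond_And: "Iff (Cond c (And a b)) (And (Cond c a) (Cond c b)) \<in> ICK G"
  using ICK.sub[OF ICK.ax_and, where s = "\<lambda>n. if n = 0 then c else if n = 1 then a else b"]
  by (simp add: Iff_def)

lemma ICK_Cond_nec:
  assumes "b \<in> ICK G"
  shows "Cond c b \<in> ICK G"
proof -
  \<comment> \<open>Necessitation is not a rule of ICK: it comes from the axiom for \<open>p \<box>\<rightarrow> \<top>\<close> and congruence.\<close>
  have "Iff b Top \<in> ICK G"
    by (rule ICK_iffI[OF ICK_imp_K[OF ICK_Top] ICK_imp_K[OF assms]])
  then have "Imp (Cond c Top) (Cond c b) \<in> ICK G"
    by (rule ICK_iffD2[OF ICK.cong_r])
  moreover have "Iff (Cond c Top) Top \<in> ICK G"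
    using ICK.sub[OF ICK.ax_top, where s = "\<lambda>_. c"] by (simp add: Iff_def Top_def)
  then have "Cond c Top \<in> ICK G"
    by (rule ICK.mp[OF ICK_iffD2 ICK_Top])
  ultimately show ?thesis by (rule ICK.mp)
qed

lemma ICK_Imp_Cond_inst:
  "Imp Q (Cond P Q) \<in> ICK G \<Longrightarrow> Imp b (Cond a b) \<in> ICK G"
  using ICK.sub[where s = "\<lambda>n. if n = 0 then a else b"] by fastforce

lemma ICK_Cond_Imp_Cond_inst:
  "Cond P (Imp (Cond P Q) Q) \<in> ICK G \<Longrightarrow> Cond a (Imp (Cond a b) b) \<in> ICK G"
  using ICK.sub[where s = "\<lambda>n. if n = 0 then a else b"] by fastforce

section \<open>Prime theories and Lindenbaum's lemma\<close>

definition ick_theory :: "form set \<Rightarrow> form set \<Rightarrow> bool" where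
  "ick_theory G T \<longleftrightarrow> ICK G \<subseteq> T \<and> (\<forall>a b. Imp a b \<in> T \<longrightarrow> a \<in> T \<longrightarrow> b \<in> T)"

definition prime_theory :: "form set \<Rightarrow> form set \<Rightarrow> bool" where
  "prime_theory G T \<longleftrightarrow> ick_theory G T \<and> Bot \<notin> T \<and> (\<forall>a b. Or a b \<in> T \<longrightarrow> a \<in> T \<or> b \<in> T)"

lemma prime_theory_ick_theory: "prime_theory G T \<Longrightarrow> ick_theory G T"
  unfolding prime_theory_def by blast

lemma prime_theory_Or: "prime_theory G T \<Longrightarrow> Or a b \<in> T \<Longrightarrow> a \<in> T \<or> b \<in> T"
  unfolding prime_theory_def by blast

lemma ick_theory_ICK: "ick_theory G (ICK G)"
  unfolding ick_theory_def using ICK.mp by blast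

lemma ick_theory_ICK_mem: "ick_theory G T \<Longrightarrow> a \<in> ICK G \<Longrightarrow> a \<in> T"
  unfolding ick_theory_def by blast

lemma ick_theory_mp: "ick_theory G T \<Longrightarrow> Imp a b \<in> T \<Longrightarrow> a \<in> T \<Longrightarrow> b \<in> T"
  unfolding ick_theory_def by blast

lemma ick_theory_mp_ICK: "ick_theory G T \<Longrightarrow> Imp a b \<in> ICK G \<Longrightarrow> a \<in> T \<Longrightarrow> b \<in> T"
  using ick_theory_ICK_mem ick_theory_mp by blast

lemma ick_theory_And: "ick_theory G T \<Longrightarrow> And a b \<in> T \<longleftrightarrow> a \<in> T \<and> b \<in> T"
  using ick_theory_mp_ICK[OF _ ICK.ipc3] ick_theory_mp_ICK[OF _ ICK.ipc4]
    ick_theory_mp[OF _ ick_theory_mp_ICK[OF _ ICK.ipc5]] by blast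

lemma ick_theory_Cond_mono:
  assumes T: "ick_theory G T" and ab: "Imp a b \<in> ICK G" and "Cond c a \<in> T"
  shows "Cond c b \<in> T"
proof -
  have "Iff a (And a b) \<in> ICK G"
    by (rule ICK_iffI[OF ICK_imp_S[OF ICK.ipc5 ab] ICK.ipc3])
  then have "Cond c (And a b) \<in> T"
    using ick_theory_mp_ICK[OF T ICK_iffD1[OF ICK.cong_r]] \<open>Cond c a \<in> T\<close> by blast
  then have "And (Cond c a) (Cond c b) \<in> T"
    by (rule ick_theory_mp_ICK[OF T ICK_iffD1[OF ICK_Cond_And]])
  then show ?thesis using ick_theory_And[OF T] by blast
qed

lemma ick_theory_Cond_mp:
  assumes T: "ick_theory G T" and "Cond c (Imp a b) \<in> T" "Cond c a \<in> T"
  shows "Cond c b \<in> T"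
proof -
  have "And (Cond c (Imp a b)) (Cond c a) \<in> T" using assms ick_theory_And[OF T] by blast
  then have "Cond c (And (Imp a b) a) \<in> T"
    by (rule ick_theory_mp_ICK[OF T ICK_iffD2[OF ICK_Cond_And]])
  then show ?thesis
    by (rule ick_theory_Cond_mono[OF T ICK_imp_S[OF ICK.ipc3 ICK.ipc4]])
qed

lemma ick_theory_Imp_image:
  assumes T: "ick_theory G T"
  shows "ick_theory G {b. Imp a b \<in> T}"
  unfolding ick_theory_def
  using ick_theory_ICK_mem[OF T ICK_imp_K] ick_theory_mp[OF T ick_theory_mp_ICK[OF T ICK.ipc2]]
  by blast

lemma ick_theory_Cond_image:
  assumes T: "ick_theory G T"
  shows "ick_theory G {b. Cond a b \<in> T}"
  unfolding ick_theory_def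
  using ick_theory_ICK_mem[OF T ICK_Cond_nec] ick_theory_Cond_mp[OF T] by blast

lemma ick_theory_chain_Union:
  assumes "C \<noteq> {}" and "subset.chain {T. ick_theory G T} C"
  shows "ick_theory G (\<Union>C)"
  unfolding ick_theory_def
proof (intro conjI allI impI)
  have C: "\<forall>T\<in>C. ick_theory G T" and tot: "\<forall>S\<in>C. \<forall>T\<in>C. S \<subseteq> T \<or> T \<subseteq> S"
    using assms(2) unfolding subset_chain_def by blast+
  then show "ICK G \<subseteq> \<Union>C" using assms(1) unfolding ick_theory_def by blast
  fix a b assume "Imp a b \<in> \<Union>C" "a \<in> \<Union>C"
  then obtain S T where "S \<in> C" "T \<in> C" "Imp a b \<in> S" "a \<in> T" by blast
  with C tot show "b \<in> \<Union>C" by (metis UnionI ick_theory_mp subsetD)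
qed

lemma lindenbaum:
  assumes T: "ick_theory G T" and b: "b \<notin> T"
  shows "\<exists>D. prime_theory G D \<and> T \<subseteq> D \<and> b \<notin> D"
proof -
  let ?E = "{S. ick_theory G S \<and> T \<subseteq> S \<and> b \<notin> S}"
  have "\<Union>C \<in> ?E" if "C \<noteq> {}" "subset.chain ?E C" for C
    using that ick_theory_chain_Union[OF that(1)]
    unfolding subset_chain_def by blast
  then obtain M where M: "ick_theory G M" "T \<subseteq> M" "b \<notin> M"
    and max: "\<forall>S\<in>?E. M \<subseteq> S \<longrightarrow> S = M"
    using subset_Zorn_nonempty[of ?E] T b by blast
  have Imp_b: "Imp a b \<in> M" if "a \<notin> M" for a
  proof (rule ccontr)
    assume "Imp a b \<notin> M"
    moreover have "M \<subseteq> {c. Imp a c \<in> M}" using ick_theory_mp_ICK[OF M(1) ICK.ipc1] by blast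
    ultimately have "{c. Imp a c \<in> M} = M"
      using max ick_theory_Imp_image[OF M(1)] M(2) by blast
    then show False using ick_theory_ICK_mem[OF M(1) ICK_imp_refl] that by blast
  qed
  have "Bot \<notin> M" using ick_theory_mp_ICK[OF M(1) ICK.ipc9] M(3) by blast
  moreover have "a \<in> M \<or> b' \<in> M" if "Or a b' \<in> M" for a b'
    using Imp_b ick_theory_mp[OF M(1) ick_theory_mp[OF M(1) ick_theory_mp_ICK[OF M(1) ICK.ipc8]]]
      that M(3) by blast
  ultimately show ?thesis using M unfolding prime_theory_def by blast
qed

lemma prime_theory_Imp_counter:
  assumes T: "ick_theory G T" and "Imp a b \<notin> T"
  shows "\<exists>D. prime_theory G D \<and> T \<subseteq> D \<and> a \<in> D \<and> b \<notin> D"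
proof -
  obtain D where D: "prime_theory G D" "{c. Imp a c \<in> T} \<subseteq> D" "b \<notin> D"
    using lindenbaum[OF ick_theory_Imp_image[OF T]] assms(2) by blast
  moreover have "T \<subseteq> {c. Imp a c \<in> T}" using ick_theory_mp_ICK[OF T ICK.ipc1] by blast
  moreover have "a \<in> {c. Imp a c \<in> T}" using ick_theory_ICK_mem[OF T ICK_imp_refl] by blast
  ultimately show ?thesis by blast
qed

section \<open>The canonical model\<close>

definition canon_truth_set :: "form set \<Rightarrow> form \<Rightarrow> form set set" where
  "canon_truth_set G a = {D. prime_theory G D \<and> a \<in> D}"

abbreviation canon_worlds :: "form set \<Rightarrow> form set set" where
  "canon_worlds G \<equiv> {D. prime_theory G D}"

abbreviation canon_val :: "form set \<Rightarrow> nat \<Rightarrow> form set set" where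
  "canon_val G n \<equiv> canon_truth_set G (Atom n)"

definition canon_rel :: "form set \<Rightarrow> form set set \<Rightarrow> form set \<Rightarrow> form set \<Rightarrow> bool" where
  "canon_rel G A S T \<longleftrightarrow> prime_theory G S \<and> prime_theory G T \<and> S \<subseteq> T \<and>
     (\<forall>a b. A = canon_truth_set G a \<longrightarrow> Cond a b \<in> S \<longrightarrow> b \<in> T)"

lemma canon_rel_prime_theory:
  "canon_rel G A S T \<Longrightarrow> prime_theory G S \<and> prime_theory G T"
  unfolding canon_rel_def by blast

lemma canon_rel_subset: "canon_rel G A S T \<Longrightarrow> S \<subseteq> T"
  unfolding canon_rel_def by blast

lemma canon_rel_antimono: "canon_rel G A S' T \<Longrightarrow> prime_theory G S \<Longrightarrow> S \<subseteq> S' \<Longrightarrow> canon_rel G A S T"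
  unfolding canon_rel_def by blast

lemma canon_truth_set_subset_Imp:
  assumes "canon_truth_set G a \<subseteq> canon_truth_set G b"
  shows "Imp a b \<in> ICK G"
proof (rule ccontr)
  assume "Imp a b \<notin> ICK G"
  then obtain D where "prime_theory G D" "a \<in> D" "b \<notin> D"
    using prime_theory_Imp_counter[OF ick_theory_ICK] by blast
  with assms show False unfolding canon_truth_set_def by blast
qed

lemma canon_truth_set_eq_Iff:
  "canon_truth_set G a = canon_truth_set G b \<Longrightarrow> Iff a b \<in> ICK G"
  by (simp add: ICK_iffI canon_truth_set_subset_Imp)

lemma canon_rel_Cond_counter:
  assumes ax: "Imp Q (Cond P Q) \<in> ICK G" and S: "prime_theory G S" and "Cond a b \<notin> S"
  shows "\<exists>T. canon_rel G (canon_truth_set G a) S T \<and> b \<notin> T"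
proof -
  have S': "ick_theory G S" using S by (rule prime_theory_ick_theory)
  obtain T where T: "prime_theory G T" "{c. Cond a c \<in> S} \<subseteq> T" "b \<notin> T"
    using lindenbaum[OF ick_theory_Cond_image[OF S']] assms(3) by blast
  have "S \<subseteq> T"
    using ick_theory_mp_ICK[OF S' ICK_Imp_Cond_inst[OF ax]] T(2) by blast
  moreover have "c \<in> T" if "canon_truth_set G a = canon_truth_set G a'" "Cond a' c \<in> S" for a' c
  proof -
    have "Iff a' a \<in> ICK G" using canon_truth_set_eq_Iff that(1) by metis
    then have "Cond a c \<in> S" using ick_theory_mp_ICK[OF S' ICK_iffD1[OF ICK.cong_l]] that(2) by blast
    then show ?thesis using T(2) by blast
  qed
  ultimately show ?thesis using S T unfolding canon_rel_def by blast
qed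

lemma canon_truth:
  assumes ax: "Imp Q (Cond P Q) \<in> ICK G"
  shows "prime_theory G S \<Longrightarrow>
    sat (canon_worlds G) (\<subseteq>) (canon_rel G) (canon_val G) S phi \<longleftrightarrow> phi \<in> S"
proof (induction phi arbitrary: S)
  case (Atom n)
  then show ?case by (simp add: canon_truth_set_def)
next
  case Bot
  then show ?case by (simp add: prime_theory_def)
next
  case (And a b)
  then show ?case using ick_theory_And[OF prime_theory_ick_theory] by simp
next
  case (Or a b)
  then have "Or a b \<in> S \<longleftrightarrow> a \<in> S \<or> b \<in> S"
    using prime_theory_Or ick_theory_mp_ICK[OF prime_theory_ick_theory ICK.ipc6]
      ick_theory_mp_ICK[OF prime_theory_ick_theory ICK.ipc7] by blast
  then show ?case using Or by simp
next
  case (Imp a b)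
  have S: "ick_theory G S" using Imp.prems by (rule prime_theory_ick_theory)
  show ?case
  proof
    assume "Imp a b \<in> S"
    then show "sat (canon_worlds G) (\<subseteq>) (canon_rel G) (canon_val G) S (Imp a b)"
      using Imp.IH ick_theory_mp[OF prime_theory_ick_theory] by auto
  next
    assume sat: "sat (canon_worlds G) (\<subseteq>) (canon_rel G) (canon_val G) S (Imp a b)"
    show "Imp a b \<in> S"
    proof (rule ccontr)
      assume "Imp a b \<notin> S"
      then obtain D where "prime_theory G D" "S \<subseteq> D" "a \<in> D" "b \<notin> D"
        using prime_theory_Imp_counter[OF S] by blast
      with sat Imp.IH show False by auto
    qed
  qed
next
  case (Cond a b)
  have A: "{T \<in> canon_worlds G. sat (canon_worlds G) (\<subseteq>) (canon_rel G) (canon_val G) T a}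
    = canon_truth_set G a"
    unfolding canon_truth_set_def[of G a] using Cond.IH(1) by blast
  have "b \<in> T" if "Cond a b \<in> S" "canon_rel G (canon_truth_set G a) S T" for T
    using that unfolding canon_rel_def by blast
  moreover have "Cond a b \<in> S" if "\<forall>T. canon_rel G (canon_truth_set G a) S T \<longrightarrow> b \<in> T"
    using that canon_rel_Cond_counter[OF ax Cond.prems] by blast
  ultimately show ?case
    unfolding sat.simps A using Cond.IH(2) canon_rel_prime_theory by blast
qed

lemma canon_rel_refl:
  assumes ax: "Cond P (Imp (Cond P Q) Q) \<in> ICK G"
    and ST: "canon_rel G A S U" "U \<subseteq> T" and T: "prime_theory G T"
  shows "canon_rel G A T T"
  unfolding canon_rel_def
proof (intro conjI allI impI T subset_refl)
  fix a b assume A: "A = canon_truth_set G a" and "Cond a b \<in> T"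
  have "Cond a (Imp (Cond a b) b) \<in> S"
    using ick_theory_ICK_mem[OF prime_theory_ick_theory ICK_Cond_Imp_Cond_inst[OF ax]]
      canon_rel_prime_theory[OF ST(1)] by blast
  then have "Imp (Cond a b) b \<in> T" using ST A unfolding canon_rel_def by blast
  then show "b \<in> T" using ick_theory_mp[OF prime_theory_ick_theory[OF T]] \<open>Cond a b \<in> T\<close> by blast
qed

lemma canon_UC_frame:
  assumes ax: "Cond P (Imp (Cond P Q) Q) \<in> ICK G" and ne: "prime_theory G S\<^sub>0"
  shows "UC_frame (canon_worlds G) (\<subseteq>) (canon_rel G)"
  unfolding UC_frame_def cond_frame_def
  using ne canon_rel_prime_theory canon_rel_subset canon_rel_antimono canon_rel_refl[OF ax]
  by (intro conjI allI impI ballI) (blast+)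

lemma canon_UC_frame_refutes:
  assumes ax1: "Imp Q (Cond P Q) \<in> ICK G" and ax2: "Cond P (Imp (Cond P Q) Q) \<in> ICK G"
    and phi: "phi \<notin> ICK G"
  shows "UC_frame (canon_worlds G) (\<subseteq>) (canon_rel G)"
    and "\<not> valid_frame (canon_worlds G) (\<subseteq>) (canon_rel G) phi"
proof -
  obtain S where S: "prime_theory G S" "phi \<notin> S"
    using lindenbaum[OF ick_theory_ICK phi] by blast
  then show "UC_frame (canon_worlds G) (\<subseteq>) (canon_rel G)"
    using canon_UC_frame[OF ax2] by blast
  have "\<forall>n. upset (canon_worlds G) (\<subseteq>) (canon_val G n)"
    unfolding upset_def canon_truth_set_def by blast
  moreover have "\<not> sat (canon_worlds G) (\<subseteq>) (canon_rel G) (canon_val G) S phi"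
    using canon_truth[OF ax1 S(1)] S(2) by blast
  ultimately show "\<not> valid_frame (canon_worlds G) (\<subseteq>) (canon_rel G) phi"
    using valid_frameD[where V = "canon_val G"] S(1) by blast
qed

theorem theorem7p18:
  fixes phi :: form
  shows "(phi \<in> sCond_ACL_UC \<longrightarrow>
            (\<forall>(X::'w set) le Rel. UC_frame X le Rel \<longrightarrow> valid_frame X le Rel phi))
       \<and> ((\<forall>(X::form set set) le Rel. UC_frame X le Rel \<longrightarrow> valid_frame X le Rel phi)
            \<longrightarrow> phi \<in> sCond_ACL_UC)"
proof (intro conjI impI allI)
  fix X :: "'w set" and le Rel
  assume "phi \<in> sCond_ACL_UC" and "UC_frame X le Rel"
  then show "valid_frame X le Rel phi" using sCond_ACL_UC_sound by blast
next
  assume valid: "\<forall>(X::form set set) le Rel. UC_frame X le Rel \<longrightarrow> valid_frame X le Rel phi"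
  let ?G = "{Imp Q (Cond P Q), Cond P (Imp (Cond P Q) Q)}"
  have "Imp Q (Cond P Q) \<in> ICK ?G" and "Cond P (Imp (Cond P Q) Q) \<in> ICK ?G"
    by (simp_all add: ICK.gam)
  with valid canon_UC_frame_refutes show "phi \<in> sCond_ACL_UC"
    unfolding sCond_ACL_UC_def by blast
qed

end
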